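(* For all integers $n\ge 0$ and $m>nt$, \[ \mathcal{L}^{(t)}\big(U^{(t)}_m(x)\,U^{(t)}_n(x)\big)=0 \quad\text{and}\quad \mathcal{L}^{(t)}\big(U^{(t)}_{nt}(x)\,U^{(t)}_n(x)\big)=1 . \]
   Context: Fix an integer $t\ge1$. For $n\ge 0$ let $P_n$ be the path graph with vertices $1,\dots,n$ and edges $\{i,i+1\}$. A $t$-path in $P_n$ is a set of $t+1$ consecutive vertices $\{i,\dots,i+t\}$. Define $U^{(t)}_n(x)=\sum_{F}(-1)^{|F|}x^{\,n-(t+1)|F|}$, the sum over all families $F$ of pairwise vertex-disjoint $t$-paths in $P_n$ ($U^{(t)}_0=1$). Let $\mu^{(t)}_m$ be the number of noncrossing set partitions of $[m]$ all of whose blocks have size $t+1$ ($\mu^{(t)}_0=1$; noncrossing means no $a<b<c<d$ with $a,c$ in one block and $b,d$ in another), and let $\mathcal{L}^{(t)}$ be the linear functional on polynomials with $\mathcal{L}^{(t)}(x^m)=\mu^{(t)}_m$. *)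

theory Defs
  imports "HOL-Computational_Algebra.Polynomial" "HOL-Library.Disjoint_Sets"
begin

text \<open>The t-paths in the path graph P_n on vertices 1..n: sets of t+1 consecutive vertices.\<close>
definition tpaths :: "nat \<Rightarrow> nat \<Rightarrow> nat set set" where
  "tpaths t n = {{i..i+t} | i. 1 \<le> i \<and> i + t \<le> n}"

definition tpath_families :: "nat \<Rightarrow> nat \<Rightarrow> nat set set set" where
  "tpath_families t n = {F. F \<subseteq> tpaths t n \<and> disjoint F}"

definition U :: "nat \<Rightarrow> nat \<Rightarrow> int poly" where
  "U t n = (\<Sum>F\<in>tpath_families t n. monom ((-1) ^ card F) (n - (t + 1) * card F))"

definition noncrossing :: "nat set set \<Rightarrow> bool" where
  "noncrossing P \<longleftrightarrow> \<not> (\<exists>B\<in>P. \<exists>B'\<in>P. B \<noteq> B' \<and>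
     (\<exists>a b c d. a < b \<and> b < c \<and> c < d \<and> a \<in> B \<and> c \<in> B \<and> b \<in> B' \<and> d \<in> B'))"

definition mu :: "nat \<Rightarrow> nat \<Rightarrow> nat" where
  "mu t m = card {P. partition_on {1..m} P \<and> (\<forall>B\<in>P. card B = t + 1) \<and> noncrossing P}"

definition L :: "nat \<Rightarrow> int poly \<Rightarrow> int" where
  "L t p = (\<Sum>k\<le>degree p. coeff p k * int (mu t k))"

end

theory Submission
  imports Defs
begin

(* 1. L is linear and sends the monomial x^k to mu t k.
   2. Splitting on whether the last t-path {m-t..m} is used gives the three-term
      recursion U_m = x U_(m-1) - U_(m-t-1) for m > t; hence U_n is monic of degree n.
   3. Noncrossing (t+1)-partitions are considered on an arbitrary finite set of naturals;
      their number only depends on the size of the set (order isomorphism invariance).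
   4. Moment identity L(U_h) = [h = 0]: L(U_h) counts pairs (F, Q) of a t-path family F and
      a noncrossing partition Q of the uncovered vertices, with sign (-1)^|F|.  These pairs
      correspond to pairs (P, F) with P a noncrossing partition of {1..h} and F a set of
      t-path blocks of P.  The alternating sum over F vanishes unless P has no t-path
      block, and every noncrossing partition of a nonempty {1..h} has one (a block of
      minimal span is an interval).
   5. From x U_h = U_(h+1) + U_(h-t), induction on k gives L(x^k U_m) = [m = k t] for m >= k t.
   6. Expanding U_n in monomials yields the theorem. *)


subsection \<open>Linearity of the moment functional\<close>

lemma L_bound:
  assumes "degree p \<le> N"
  shows "L t p = (\<Sum>k\<le>N. coeff p k * int (mu t k))"
proof -
  have "(\<Sum>k\<le>N. coeff p k * int (mu t k)) = (\<Sum>k\<le>degree p. coeff p k * int (mu t k))"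
    by (rule sum.mono_neutral_right) (use assms in \<open>auto simp: coeff_eq_0\<close>)
  thus ?thesis by (simp add: L_def)
qed

lemma L_add: "L t (p + q) = L t p + L t q"
proof -
  let ?N = "max (degree p) (degree q)"
  have "L t (p + q) = (\<Sum>k\<le>?N. coeff (p + q) k * int (mu t k))"
    by (rule L_bound) (simp add: degree_add_le)
  also have "\<dots> = (\<Sum>k\<le>?N. coeff p k * int (mu t k)) + (\<Sum>k\<le>?N. coeff q k * int (mu t k))"
    by (simp add: sum.distrib algebra_simps)
  also have "\<dots> = L t p + L t q"
    by (simp add: L_bound[symmetric])
  finally show ?thesis .
qed

lemma L_smult: "L t (smult c p) = c * L t p"
proof -
  have "L t (smult c p) = (\<Sum>k\<le>degree p. coeff (smult c p) k * int (mu t k))"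
    by (rule L_bound) (simp add: degree_smult_le)
  thus ?thesis by (simp add: L_def sum_distrib_left algebra_simps)
qed

lemma L_0 [simp]: "L t 0 = 0"
  by (simp add: L_def)

lemma L_sum: "L t (sum f A) = (\<Sum>a\<in>A. L t (f a))"
  by (induction A rule: infinite_finite_induct) (auto simp: L_add)

lemma L_monom: "L t (monom c k) = c * int (mu t k)"
proof -
  have "L t (monom c k) = (\<Sum>j\<le>k. coeff (monom c k) j * int (mu t j))"
    by (rule L_bound) (simp add: degree_monom_le)
  thus ?thesis
    by (simp add: coeff_monom if_distrib[where f="\<lambda>x. x * _"] sum.delta cong: if_cong)
qed

lemma L_mult_expand:
  "L t (p * q) = (\<Sum>j\<le>degree p. coeff p j * L t (monom 1 j * q))"
proof -
  have "p * q = (\<Sum>j\<le>degree p. monom (coeff p j) j) * q"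
    by (simp add: poly_as_sum_of_monoms)
  also have "\<dots> = (\<Sum>j\<le>degree p. smult (coeff p j) (monom 1 j * q))"
    unfolding sum_distrib_right
    by (intro sum.cong refl) (metis mult_smult_left mult.right_neutral smult_monom)
  finally show ?thesis by (simp add: L_sum L_smult)
qed


subsection \<open>Families of t-paths and the recursion for U\<close>

lemma tpaths_mono: "n \<le> n' \<Longrightarrow> tpaths t n \<subseteq> tpaths t n'"
  by (auto simp: tpaths_def)

lemma finite_tpaths: "finite (tpaths t n)"
proof -
  have "tpaths t n \<subseteq> Pow {1..n}" by (auto simp: tpaths_def)
  thus ?thesis by (rule finite_subset) simp
qed

lemma finite_tpath_families: "finite (tpath_families t n)"
  by (rule finite_subset[of _ "Pow (tpaths t n)"]) (auto simp: tpath_families_def finite_tpaths)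

lemma tpath_family_Union:
  assumes "F \<in> tpath_families t n"
  shows "card (\<Union>F) = (t + 1) * card F" and "\<Union>F \<subseteq> {1..n}"
proof -
  have sub: "F \<subseteq> tpaths t n" and dis: "disjoint F"
    using assms by (auto simp: tpath_families_def)
  have "card (\<Union>F) = (\<Sum>q\<in>F. card q)"
    by (rule card_Union_disjoint[OF dis]) (use sub in \<open>auto simp: tpaths_def\<close>)
  also have "\<dots> = (\<Sum>q\<in>F. t + 1)"
    using sub by (intro sum.cong) (auto simp: tpaths_def)
  finally show "card (\<Union>F) = (t + 1) * card F" by simp
  show "\<Union>F \<subseteq> {1..n}" using sub by (auto simp: tpaths_def)
qed

lemma tpath_family_bound:
  assumes "F \<in> tpath_families t n"
  shows "(t + 1) * card F \<le> n"
proof -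
  have "card (\<Union>F) \<le> card {1..n}"
    by (rule card_mono) (use tpath_family_Union[OF assms] in auto)
  thus ?thesis using tpath_family_Union[OF assms] by simp
qed

lemma U_small: "n \<le> t \<Longrightarrow> U t n = monom 1 n"
proof -
  assume "n \<le> t"
  hence "tpaths t n = {}" by (auto simp: tpaths_def)
  hence "tpath_families t n = {{}}" by (auto simp: tpath_families_def)
  thus ?thesis by (simp add: U_def)
qed

lemma tpath_family_without_last:
  assumes "F \<in> tpath_families t m" and "{m-t..m} \<notin> F"
  shows "F \<in> tpath_families t (m - 1)"
proof -
  have "F \<subseteq> tpaths t (m - 1)"
  proof
    fix q assume q: "q \<in> F"
    then obtain i where i: "q = {i..i+t}" "1 \<le> i" "i + t \<le> m"
      using assms(1) by (auto simp: tpath_families_def tpaths_def)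
    have "i + t \<noteq> m" using assms(2) q i by auto
    thus "q \<in> tpaths t (m - 1)" using i by (auto simp: tpaths_def)
  qed
  thus ?thesis using assms(1) by (auto simp: tpath_families_def)
qed

lemma tpath_family_remove_last:
  assumes F: "F \<in> tpath_families t m" and p: "{m-t..m} \<in> F"
  shows "F - {{m-t..m}} \<in> tpath_families t (m - t - 1)"
proof -
  have sub: "F \<subseteq> tpaths t m" and dis: "disjoint F"
    using F by (auto simp: tpath_families_def)
  have "F - {{m-t..m}} \<subseteq> tpaths t (m - t - 1)"
  proof
    fix q assume q: "q \<in> F - {{m-t..m}}"
    then obtain i where i: "q = {i..i+t}" "1 \<le> i" "i + t \<le> m"
      using sub by (auto simp: tpaths_def)
    have "q \<inter> {m-t..m} = {}" using dis q p by (auto simp: disjoint_def)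
    hence "i + t < m - t" using i by (auto simp: disjoint_iff)
    thus "q \<in> tpaths t (m - t - 1)" using i by (auto simp: tpaths_def)
  qed
  moreover have "disjoint (F - {{m-t..m}})" using dis by (auto simp: disjoint_def)
  ultimately show ?thesis by (auto simp: tpath_families_def)
qed

lemma tpath_family_add_last:
  assumes m: "t + 1 \<le> m" and G: "G \<in> tpath_families t (m - t - 1)"
  shows "insert {m-t..m} G \<in> tpath_families t m"
proof -
  have Gs: "G \<subseteq> tpaths t (m - t - 1)" and Gd: "disjoint G"
    using G by (auto simp: tpath_families_def)
  have "{m-t..m} \<in> tpaths t m"
    using m unfolding tpaths_def by (auto intro!: exI[of _ "m - t"])
  moreover have "G \<subseteq> tpaths t m" using Gs tpaths_mono[of "m - t - 1" m t] by auto
  moreover have "\<forall>q\<in>G. disjnt {m-t..m} q"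
    using Gs m by (fastforce simp: tpaths_def disjnt_def)
  ultimately show ?thesis using Gd
    by (auto simp: tpath_families_def pairwise_insert disjnt_sym)
qed

lemma tpath_families_split:
  assumes "t + 1 \<le> m"
  shows "tpath_families t m = tpath_families t (m - 1) \<union> insert {m-t..m} ` tpath_families t (m - t - 1)"
proof (intro equalityI subsetI)
  fix F assume F: "F \<in> tpath_families t m"
  show "F \<in> tpath_families t (m - 1) \<union> insert {m-t..m} ` tpath_families t (m - t - 1)"
  proof (cases "{m-t..m} \<in> F")
    case True
    hence "F = insert {m-t..m} (F - {{m-t..m}})" by auto
    thus ?thesis using tpath_family_remove_last[OF F True] by blast
  qed (use tpath_family_without_last[OF F] in blast)
next
  fix F assume "F \<in> tpath_families t (m - 1) \<union> insert {m-t..m} ` tpath_families t (m - t - 1)"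
  then show "F \<in> tpath_families t m"
  proof
    assume "F \<in> tpath_families t (m - 1)"
    thus ?thesis using tpaths_mono[of "m - 1" m t] by (auto simp: tpath_families_def)
  qed (use tpath_family_add_last[OF assms] in blast)
qed

lemma last_tpath_not_in_shorter:
  assumes "k < m" and "F \<in> tpath_families t k"
  shows "{m-t..m} \<notin> F"
  using assms by (auto simp: tpath_families_def tpaths_def)

lemma U_part_without_last:
  assumes "1 \<le> m"
  shows "(\<Sum>F\<in>tpath_families t (m - 1). monom ((-1::int) ^ card F) (m - (t + 1) * card F))
       = monom 1 1 * U t (m - 1)"
proof -
  have "monom ((-1::int) ^ card F) (m - (t + 1) * card F)
      = monom 1 1 * monom ((-1) ^ card F) (m - 1 - (t + 1) * card F)"
    if F: "F \<in> tpath_families t (m - 1)" for F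
  proof -
    have "m - (t + 1) * card F = Suc (m - 1 - (t + 1) * card F)"
      using tpath_family_bound[OF F] assms by simp
    thus ?thesis by (simp add: mult_monom)
  qed
  thus ?thesis by (simp add: U_def sum_distrib_left)
qed

lemma U_part_with_last:
  assumes m: "t + 1 \<le> m"
  shows "(\<Sum>F\<in>insert {m-t..m} ` tpath_families t (m - t - 1). monom ((-1::int) ^ card F) (m - (t + 1) * card F))
       = - U t (m - t - 1)"
proof -
  define g :: "nat set set \<Rightarrow> int poly" where "g = (\<lambda>F. monom ((-1) ^ card F) (m - (t + 1) * card F))"
  have notin: "{m-t..m} \<notin> G" if "G \<in> tpath_families t (m - t - 1)" for G
    using last_tpath_not_in_shorter[OF _ that] m by simp
  have "inj_on (insert {m-t..m}) (tpath_families t (m - t - 1))"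
    by (rule inj_onI) (metis notin insert_ident)
  hence "sum g (insert {m-t..m} ` tpath_families t (m - t - 1))
      = (\<Sum>G\<in>tpath_families t (m - t - 1). g (insert {m-t..m} G))"
    by (simp add: sum.reindex)
  also have "\<dots> = (\<Sum>G\<in>tpath_families t (m - t - 1). - monom ((-1) ^ card G) (m - t - 1 - (t + 1) * card G))"
  proof (rule sum.cong[OF refl])
    fix G assume G: "G \<in> tpath_families t (m - t - 1)"
    have "card (insert {m-t..m} G) = Suc (card G)"
      using notin[OF G] finite_subset[OF _ finite_tpaths] G by (auto simp: tpath_families_def)
    moreover have "m - (t + 1) * Suc (card G) = m - t - 1 - (t + 1) * card G" by simp
    ultimately show "g (insert {m-t..m} G) = - monom ((-1) ^ card G) (m - t - 1 - (t + 1) * card G)"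
      by (simp add: g_def minus_monom algebra_simps)
  qed
  also have "\<dots> = - U t (m - t - 1)" by (simp only: U_def sum_negf)
  finally show ?thesis by (simp only: g_def)
qed

lemma U_rec:
  assumes m: "t + 1 \<le> m"
  shows "U t m = monom 1 1 * U t (m - 1) - U t (m - t - 1)"
proof -
  have disj: "tpath_families t (m - 1) \<inter> insert {m-t..m} ` tpath_families t (m - t - 1) = {}"
    using last_tpath_not_in_shorter[of "m - 1" m] m by auto
  have "U t m = (\<Sum>F\<in>tpath_families t (m - 1). monom ((-1::int) ^ card F) (m - (t + 1) * card F))
      + (\<Sum>F\<in>insert {m-t..m} ` tpath_families t (m - t - 1). monom ((-1) ^ card F) (m - (t + 1) * card F))"
    unfolding U_def tpath_families_split[OF m]
    by (rule sum.union_disjoint[OF _ _ disj]) (simp_all add: finite_tpath_families)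
  thus ?thesis using U_part_without_last[of m t] U_part_with_last[OF m] m by simp
qed

lemma x_times_U: "monom 1 1 * U t h = U t (h + 1) + (if t \<le> h then U t (h - t) else 0)"
proof (cases "t \<le> h")
  case True
  thus ?thesis using U_rec[of t "h + 1"] by simp
next
  case False
  thus ?thesis by (simp add: U_small mult_monom)
qed

lemma U_degree: "degree (U t n) = n" and U_coeff_top: "coeff (U t n) n = 1"
proof -
  have "degree (U t n) \<le> n \<and> coeff (U t n) n = 1"
  proof (induction n rule: less_induct)
    case (less n)
    show ?case
    proof (cases "n \<le> t")
      case True
      thus ?thesis by (simp add: U_small degree_monom_le)
    next
      case False
      have pc: "monom 1 1 * q = pCons 0 q" for q :: "int poly"
        by (simp add: monom_Suc monom_0)
      have IH1: "degree (U t (n - 1)) \<le> n - 1" "coeff (U t (n - 1)) (n - 1) = 1"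
        and IH2: "degree (U t (n - t - 1)) \<le> n - t - 1"
        using less[of "n - 1"] less[of "n - t - 1"] False by auto
      have rec: "U t n = pCons 0 (U t (n - 1)) - U t (n - t - 1)"
        using U_rec[of t n, unfolded pc] False by simp
      have "degree (pCons 0 (U t (n - 1))) \<le> n"
        using degree_pCons_le[of 0 "U t (n - 1)"] IH1 False by linarith
      hence "degree (U t n) \<le> n"
        unfolding rec using IH2 degree_diff_le_max[of "pCons 0 (U t (n - 1))" "U t (n - t - 1)"]
        by linarith
      moreover have "coeff (U t n) n = 1"
        unfolding rec using False IH1 coeff_eq_0[of "U t (n - t - 1)" n] IH2
        by (cases n) auto
      ultimately show ?thesis by blast
    qed
  qed
  thus "coeff (U t n) n = 1" and "degree (U t n) = n"
    using le_degree[of "U t n" n] by auto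
qed


subsection \<open>Noncrossing partitions of an arbitrary finite set\<close>

definition NC :: "nat \<Rightarrow> nat set \<Rightarrow> nat set set set" where
  "NC t A = {P. partition_on A P \<and> (\<forall>B\<in>P. card B = t + 1) \<and> noncrossing P}"

lemma finite_NC: "finite A \<Longrightarrow> finite (NC t A)"
  by (rule finite_subset[of _ "Pow (Pow A)"]) (auto simp: NC_def partition_on_def)

lemma noncrossingD:
  assumes "noncrossing P" "B \<in> P" "B' \<in> P" "B \<noteq> B'" "a < b" "b < c" "c < d"
    "a \<in> B" "c \<in> B" "b \<in> B'" "d \<in> B'"
  shows False
proof -
  have crossing: "\<exists>a b c d. a < b \<and> b < c \<and> c < d \<and> a \<in> B \<and> c \<in> B \<and> b \<in> B' \<and> d \<in> B'"
    by (intro exI[of _ a] exI[of _ b] exI[of _ c] exI[of _ d]) (use assms in simp)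
  have "\<exists>B\<in>P. \<exists>B'\<in>P. B \<noteq> B' \<and>
      (\<exists>a b c d. a < b \<and> b < c \<and> c < d \<and> a \<in> B \<and> c \<in> B \<and> b \<in> B' \<and> d \<in> B')"
    by (rule bexI[OF _ assms(2)], rule bexI[OF _ assms(3)], rule conjI[OF assms(4) crossing])
  with assms(1) show False unfolding noncrossing_def by (rule notE)
qed

lemma noncrossingI:
  assumes "\<And>B B' a b c d. B \<in> P \<Longrightarrow> B' \<in> P \<Longrightarrow> B \<noteq> B' \<Longrightarrow> a < b \<Longrightarrow> b < c \<Longrightarrow> c < d
    \<Longrightarrow> a \<in> B \<Longrightarrow> c \<in> B \<Longrightarrow> b \<in> B' \<Longrightarrow> d \<in> B' \<Longrightarrow> False"
  shows "noncrossing P"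
  unfolding noncrossing_def
  by (intro notI, elim bexE exE conjE) (rule assms; assumption)

lemma NC_transfer:
  assumes bij: "bij_betw f A B" and ord: "\<And>x y. x \<in> A \<Longrightarrow> y \<in> A \<Longrightarrow> x < y \<longleftrightarrow> f x < f y"
    and P: "P \<in> NC t A"
  shows "(`) f ` P \<in> NC t B"
proof -
  have part: "partition_on A P" and cardP: "\<forall>b\<in>P. card b = t + 1" and nc: "noncrossing P"
    using P by (auto simp: NC_def)
  have inj: "inj_on f A" and fA: "f ` A = B" using bij by (auto simp: bij_betw_def)
  have sub: "\<And>b. b \<in> P \<Longrightarrow> b \<subseteq> A" using part by (auto simp: partition_on_def)
  have "{} \<notin> P" using part by (auto simp: partition_on_def)
  hence "(`) f ` P - {{}} = (`) f ` P" by auto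
  hence "partition_on B ((`) f ` P)"
    using partition_on_inj_image[OF part inj] fA by simp
  moreover have "card (f ` b) = t + 1" if "b \<in> P" for b
    using cardP that card_image[OF inj_on_subset[OF inj sub[OF that]]] by simp
  moreover have "noncrossing ((`) f ` P)"
  proof (rule noncrossingI)
    fix C C' a b c d
    assume C: "C \<in> (`) f ` P" "C' \<in> (`) f ` P" "C \<noteq> C'" and o: "a < b" "b < c" "c < d"
      and pts: "a \<in> C" "c \<in> C" "b \<in> C'" "d \<in> C'"
    obtain D D' where D: "D \<in> P" "D' \<in> P" "C = f ` D" "C' = f ` D'" using C(1,2) by blast
    obtain a' c' where a'c': "a' \<in> D" "c' \<in> D" "a = f a'" "c = f c'" using pts(1,2) D(3) by blast
    obtain b' d' where b'd': "b' \<in> D'" "d' \<in> D'" "b = f b'" "d = f d'" using pts(3,4) D(4) by blast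
    have A: "a' \<in> A" "b' \<in> A" "c' \<in> A" "d' \<in> A" using D a'c' b'd' sub by auto
    have "a' < b'" "b' < c'" "c' < d'" using ord[OF A(1,2)] ord[OF A(2,3)] ord[OF A(3,4)] o a'c' b'd' by auto
    moreover have "D \<noteq> D'" using C(3) D by auto
    ultimately show False using noncrossingD[OF nc D(1,2)] a'c'(1,2) b'd'(1,2) by blast
  qed
  ultimately show ?thesis by (simp add: NC_def)
qed

lemma NC_card_le:
  assumes bij: "bij_betw f A B" and ord: "\<And>x y. x \<in> A \<Longrightarrow> y \<in> A \<Longrightarrow> x < y \<longleftrightarrow> f x < f y"
    and fin: "finite B"
  shows "card (NC t A) \<le> card (NC t B)"
proof (rule card_inj_on_le)
  show "(`) ((`) f) ` NC t A \<subseteq> NC t B" using NC_transfer[OF bij ord] by blast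
  show "finite (NC t B)" by (rule finite_NC[OF fin])
  have "inj_on ((`) f) (Pow A)"
    using bij by (intro inj_on_image) (auto simp: bij_betw_def)
  moreover have "\<Union> (NC t A) \<subseteq> Pow A" by (auto simp: NC_def partition_on_def)
  ultimately have "inj_on ((`) f) (\<Union> (NC t A))" by (rule inj_on_subset)
  thus "inj_on ((`) ((`) f)) (NC t A)" by (rule inj_on_image)
qed

lemma NC_card_eq:
  assumes bij: "bij_betw f A B" and ord: "\<And>x y. x \<in> A \<Longrightarrow> y \<in> A \<Longrightarrow> x < y \<longleftrightarrow> f x < f y"
    and finA: "finite A"
  shows "card (NC t A) = card (NC t B)"
proof (rule antisym)
  show "card (NC t A) \<le> card (NC t B)"
    using NC_card_le[OF bij ord] bij finA bij_betw_finite by blast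
  define g where "g = inv_into A f"
  have bg: "bij_betw g B A" unfolding g_def by (rule bij_betw_inv_into[OF bij])
  have fg: "\<And>x. x \<in> B \<Longrightarrow> f (g x) = x"
    unfolding g_def using bij by (simp add: bij_betw_inv_into_right)
  have "x < y \<longleftrightarrow> g x < g y" if "x \<in> B" "y \<in> B" for x y
    using ord[of "g x" "g y"] fg that bg by (auto simp: bij_betw_def)
  thus "card (NC t B) \<le> card (NC t A)" by (rule NC_card_le[OF bg _ finA])
qed

lemma ord_iso_initial_segment:
  fixes A :: "nat set"
  assumes "finite A"
  obtains f where "bij_betw f {1..card A} A"
    and "\<And>x y. x \<in> {1..card A} \<Longrightarrow> y \<in> {1..card A} \<Longrightarrow> x < y \<longleftrightarrow> f x < f y"
proof -
  define xs where "xs = sorted_list_of_set A"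
  have sw: "sorted_wrt (<) xs" and setxs: "set xs = A" and len: "length xs = card A"
    and dis: "distinct xs"
    using assms by (auto simp: xs_def)
  define f where "f i = xs ! (i - 1)" for i
  have mono: "f x < f y" if "x \<in> {1..card A}" "y \<in> {1..card A}" "x < y" for x y
    using that len unfolding f_def by (intro sorted_wrt_nth_less[OF sw]) auto
  have ord: "x < y \<longleftrightarrow> f x < f y" if "x \<in> {1..card A}" "y \<in> {1..card A}" for x y
    using mono[OF that] mono[OF that(2,1)] by (metis less_asym linorder_neqE_nat)
  have "bij_betw (\<lambda>i. i - 1) {1..card A} {..<card A}"
    by (rule bij_betw_byWitness[where f' = Suc]) auto
  moreover have "bij_betw ((!) xs) {..<card A} A"
    using bij_betw_nth[of xs] dis len setxs by simp
  ultimately have "bij_betw f {1..card A} A"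
    unfolding f_def using bij_betw_trans by (fastforce simp: comp_def)
  thus ?thesis using ord that by blast
qed

lemma NC_card_mu: "finite A \<Longrightarrow> card (NC t A) = mu t (card A)"
  by (erule ord_iso_initial_segment, subst NC_card_eq[symmetric]) (auto simp: mu_def NC_def)


subsection \<open>The moment identity L(U_h) = [h = 0]\<close>

lemma sum_Pow_sign:
  assumes "finite S"
  shows "(\<Sum>F\<in>Pow S. (-1::int) ^ card F) = (if S = {} then 1 else 0)"
  using prod_diff_conv_sum[OF assms, of "\<lambda>_. 1::int" "\<lambda>_. 1"] assms
  by (simp add: power_0_left)

lemma noncrossing_subset: "noncrossing P \<Longrightarrow> Q \<subseteq> P \<Longrightarrow> noncrossing Q"
  by (rule noncrossingI) (meson noncrossingD subsetD)

text \<open>Interval blocks never take part in a crossing.\<close>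
lemma noncrossing_union_intervals:
  assumes nc: "noncrossing Q" and dis: "disjoint (I \<union> Q)" and iv: "\<forall>B\<in>I. \<exists>i j. B = {i..j}"
  shows "noncrossing (I \<union> Q)"
proof (rule noncrossingI)
  fix B B' a b c d assume H: "B \<in> I \<union> Q" "B' \<in> I \<union> Q" "B \<noteq> B'"
    "a < b" "b < c" "c < d" "a \<in> B" "c \<in> B" "b \<in> B'" "d \<in> B'"
  have dj: "B \<inter> B' = {}" using dis H(1-3) unfolding disjoint_def by blast
  have "B \<notin> I"
  proof
    assume "B \<in> I"
    then obtain i j where "B = {i..j}" using iv by blast
    thus False using dj H by auto
  qed
  moreover have "B' \<notin> I"
  proof
    assume "B' \<in> I"
    then obtain i j where "B' = {i..j}" using iv by blast
    thus False using dj H by auto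
  qed
  ultimately show False using noncrossingD[OF nc _ _ H(3-10)] H(1,2) by blast
qed

text \<open>A noncrossing partition of a nonempty {1..h} has a block that is an interval: a block of
  minimal span cannot enclose a point of another block, since that block would have to lie
  strictly inside the span.\<close>
lemma noncrossing_interval_block:
  assumes part: "partition_on {1..h} P" and nc: "noncrossing P" and h: "h > 0"
  shows "\<exists>B\<in>P. B = {Min B..Max B}"
proof -
  have blk: "finite B" "B \<noteq> {}" "B \<subseteq> {1..h}" if "B \<in> P" for B
    using part that finite_subset[of B "{1..h}"] by (auto simp: partition_on_def)
  have "P \<noteq> {}" using part h by (auto simp: partition_on_def)
  then obtain B where B: "B \<in> P" and least: "\<And>B'. B' \<in> P \<Longrightarrow> Max B - Min B \<le> Max B' - Min B'"
    using ex_has_least_nat[of "\<lambda>B. B \<in> P" _ "\<lambda>B. Max B - Min B"] by blast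
  have mB: "Min B \<in> B" "Max B \<in> B" using blk[OF B] by auto
  have "{Min B..Max B} \<subseteq> B"
  proof (rule ccontr)
    assume "\<not> ?thesis"
    then obtain x where x: "Min B < x" "x < Max B" "x \<notin> B"
      using mB by (force simp: le_less)
    have "x \<in> {1..h}" using mB blk(3)[OF B] x by force
    then obtain B' where B': "B' \<in> P" "x \<in> B'" using partition_onD1[OF part] by blast
    have ne: "B \<noteq> B'" using B' x by auto
    have dj: "B \<inter> B' = {}" using partition_onD2[OF part] B B'(1) ne unfolding disjoint_def by blast
    have inside: "Min B < y \<and> y < Max B" if y: "y \<in> B'" for y
    proof -
      have "y \<noteq> Min B" "y \<noteq> Max B" using dj y mB by blast+
      moreover have "\<not> y < Min B"
        using noncrossingD[OF nc B'(1) B ne[symmetric] _ x(1) x(2) y B'(2) mB] by blast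
      moreover have "\<not> Max B < y"
        using noncrossingD[OF nc B B'(1) ne x(1) x(2) _ mB B'(2) y] by blast
      ultimately show ?thesis by linarith
    qed
    have mB': "Min B' \<in> B'" "Max B' \<in> B'" using blk[OF B'(1)] by auto
    have "Max B' - Min B' < Max B - Min B"
      using inside[OF mB'(1)] inside[OF mB'(2)] by linarith
    thus False using least[OF B'(1)] by linarith
  qed
  moreover have "B \<subseteq> {Min B..Max B}" using blk[OF B] by auto
  ultimately show ?thesis using B by blast
qed

lemma NC_has_tpath_block:
  assumes "P \<in> NC t {1..h}" and "h > 0"
  shows "P \<inter> tpaths t h \<noteq> {}"
proof -
  have part: "partition_on {1..h} P" and c: "\<forall>B\<in>P. card B = t + 1" and nc: "noncrossing P"
    using assms by (auto simp: NC_def)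
  obtain B where B: "B \<in> P" and eq: "B = {Min B..Max B}"
    using noncrossing_interval_block[OF part nc assms(2)] by blast
  have sub: "B \<subseteq> {1..h}" using part B by (auto simp: partition_on_def)
  have "Suc (Max B) - Min B = t + 1" using c B eq by (metis card_atLeastAtMost)
  moreover have "B \<noteq> {}" using B part by (auto simp: partition_on_def)
  hence "Min B \<in> B" "Max B \<in> B" using finite_subset[OF sub] by simp_all
  ultimately have mx: "Max B = Min B + t" and "1 \<le> Min B" "Min B + t \<le> h"
    using sub by (fastforce dest: Min_le[OF finite_subset[OF sub], of "Max B"])+
  hence "B \<in> tpaths t h"
    using eq unfolding tpaths_def mx by blast
  thus ?thesis using B by blast
qed

lemma NC_join_tpath_family:
  assumes F: "F \<in> tpath_families t h" and Q: "Q \<in> NC t ({1..h} - \<Union>F)"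
  shows "F \<union> Q \<in> NC t {1..h}" and "F \<inter> Q = {}"
proof -
  have Fs: "F \<subseteq> tpaths t h" and Fd: "disjoint F" using F by (auto simp: tpath_families_def)
  have pq: "partition_on ({1..h} - \<Union>F) Q" and qc: "\<forall>b\<in>Q. card b = t + 1" and qn: "noncrossing Q"
    using Q by (auto simp: NC_def)
  have UQ: "\<Union>Q = {1..h} - \<Union>F" using partition_onD1[OF pq] by simp
  have ne: "{} \<notin> F \<union> Q" using partition_onD3[OF pq] Fs by (auto simp: tpaths_def)
  have "b = {}" if "b \<in> F" "b \<in> Q" for b using that UQ by blast
  thus "F \<inter> Q = {}" using ne by blast
  have U: "\<Union>(F \<union> Q) = {1..h}" using tpath_family_Union(2)[OF F] UQ by blast
  have D: "disjoint (F \<union> Q)"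
    by (rule disjoint_union[OF Fd partition_onD2[OF pq]]) (use UQ in blast)
  have "partition_on {1..h} (F \<union> Q)" unfolding partition_on_def using U D ne by blast
  moreover have "\<forall>b\<in>F \<union> Q. card b = t + 1" using qc Fs by (auto simp: tpaths_def)
  moreover have "noncrossing (F \<union> Q)"
    by (rule noncrossing_union_intervals[OF qn D]) (use Fs in \<open>auto simp: tpaths_def\<close>)
  ultimately show "F \<union> Q \<in> NC t {1..h}" unfolding NC_def by blast
qed

lemma NC_remove_tpath_blocks:
  assumes P: "P \<in> NC t {1..h}" and F: "F \<subseteq> P \<inter> tpaths t h"
  shows "F \<in> tpath_families t h" and "P - F \<in> NC t ({1..h} - \<Union>F)"
proof -
  have pp: "partition_on {1..h} P" and pc: "\<forall>b\<in>P. card b = t + 1" and pn: "noncrossing P"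
    using P by (auto simp: NC_def)
  have Pd: "disjoint P" by (rule partition_onD2[OF pp])
  show "F \<in> tpath_families t h"
    using F pairwise_subset[OF Pd] unfolding tpath_families_def by blast
  have "\<Union>(P - F) = \<Union>P - \<Union>F"
    using diff_Union_pairwise_disjoint[OF Pd] F by blast
  hence "partition_on ({1..h} - \<Union>F) (P - F)"
    using partition_onD1[OF pp] partition_onD3[OF pp] pairwise_subset[OF Pd]
    unfolding partition_on_def by auto
  moreover have "noncrossing (P - F)" by (rule noncrossing_subset[OF pn]) blast
  ultimately show "P - F \<in> NC t ({1..h} - \<Union>F)" unfolding NC_def using pc by blast
qed

lemma L_U_pair_sum:
  "L t (U t h) = (\<Sum>(F, Q) \<in> Sigma (tpath_families t h) (\<lambda>F. NC t ({1..h} - \<Union>F)). (-1::int) ^ card F)"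
proof -
  have "card (NC t ({1..h} - \<Union>F)) = mu t (h - (t + 1) * card F)"
    if F: "F \<in> tpath_families t h" for F
  proof -
    have "finite (\<Union>F)" using tpath_family_Union(2)[OF F] finite_subset by blast
    hence "card ({1..h} - \<Union>F) = h - (t + 1) * card F"
      using card_Diff_subset[OF _ tpath_family_Union(2)[OF F]] tpath_family_Union(1)[OF F] by simp
    thus ?thesis by (simp add: NC_card_mu)
  qed
  hence "L t (U t h) = (\<Sum>F\<in>tpath_families t h. \<Sum>Q\<in>NC t ({1..h} - \<Union>F). (-1::int) ^ card F)"
    by (simp add: U_def L_sum L_monom mult.commute)
  also have "\<dots> = (\<Sum>(F, Q) \<in> Sigma (tpath_families t h) (\<lambda>F. NC t ({1..h} - \<Union>F)). (-1) ^ card F)"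
    by (rule sum.Sigma) (auto intro: finite_tpath_families finite_NC)
  finally show ?thesis .
qed

lemma join_tpath_family_bij:
  "bij_betw (\<lambda>(F, Q). (F \<union> Q, F))
     (Sigma (tpath_families t h) (\<lambda>F. NC t ({1..h} - \<Union>F)))
     (Sigma (NC t {1..h}) (\<lambda>P. Pow (P \<inter> tpaths t h)))"
proof (rule bij_betw_byWitness[where f' = "\<lambda>(P, F). (F, P - F)"])
  show "\<forall>a\<in>Sigma (tpath_families t h) (\<lambda>F. NC t ({1..h} - \<Union>F)).
          (\<lambda>(P, F). (F, P - F)) ((\<lambda>(F, Q). (F \<union> Q, F)) a) = a"
    using NC_join_tpath_family(2) by fastforce
  show "\<forall>b\<in>Sigma (NC t {1..h}) (\<lambda>P. Pow (P \<inter> tpaths t h)).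
          (\<lambda>(F, Q). (F \<union> Q, F)) ((\<lambda>(P, F). (F, P - F)) b) = b"
    by auto
  show "(\<lambda>(F, Q). (F \<union> Q, F)) ` Sigma (tpath_families t h) (\<lambda>F. NC t ({1..h} - \<Union>F))
          \<subseteq> Sigma (NC t {1..h}) (\<lambda>P. Pow (P \<inter> tpaths t h))"
    using NC_join_tpath_family(1) by (auto simp: tpath_families_def)
  show "(\<lambda>(P, F). (F, P - F)) ` Sigma (NC t {1..h}) (\<lambda>P. Pow (P \<inter> tpaths t h))
          \<subseteq> Sigma (tpath_families t h) (\<lambda>F. NC t ({1..h} - \<Union>F))"
    using NC_remove_tpath_blocks by auto
qed

text \<open>The moment identity: summing first over F, the alternating sum vanishes for every P
  with a t-path block, and only the empty partition of the empty set survives.\<close>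
lemma L_U: "L t (U t h) = (if h = 0 then 1 else 0)"
proof -
  have "L t (U t h) = (\<Sum>(P, F) \<in> Sigma (NC t {1..h}) (\<lambda>P. Pow (P \<inter> tpaths t h)). (-1::int) ^ card F)"
    unfolding L_U_pair_sum sum.reindex_bij_betw[OF join_tpath_family_bij, symmetric]
    by (simp add: case_prod_beta)
  also have "\<dots> = (\<Sum>P\<in>NC t {1..h}. \<Sum>F\<in>Pow (P \<inter> tpaths t h). (-1::int) ^ card F)"
    by (rule sum.Sigma[symmetric]) (auto intro: finite_NC finite_tpaths)
  also have "\<dots> = (\<Sum>P\<in>NC t {1..h}. if P \<inter> tpaths t h = {} then 1 else 0)"
    by (intro sum.cong refl sum_Pow_sign) (simp add: finite_tpaths)
  also have "\<dots> = (if h = 0 then 1 else 0)"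
  proof (cases "h = 0")
    case True
    hence "NC t {1..h} = {{}}" by (auto simp: NC_def partition_on_empty noncrossing_def)
    thus ?thesis using True by simp
  qed (simp add: NC_has_tpath_block)
  finally show ?thesis .
qed


subsection \<open>Orthogonality\<close>

lemma L_xpow_U:
  assumes "k * t \<le> m"
  shows "L t (monom 1 k * U t m) = (if m = k * t then 1 else 0)"
  using assms
proof (induction k arbitrary: m)
  case 0
  thus ?case by (simp add: L_U monom_0 one_pCons[symmetric])
next
  case (Suc k)
  hence "t \<le> m" by simp
  have "monom 1 (Suc k) * U t m = monom 1 k * (monom 1 1 * U t m)"
    by (simp add: mult_monom mult.assoc[symmetric])
  also have "\<dots> = monom 1 k * U t (m + 1) + monom 1 k * U t (m - t)"
    unfolding x_times_U using \<open>t \<le> m\<close> by (simp add: distrib_left)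
  finally have "L t (monom 1 (Suc k) * U t m)
      = L t (monom 1 k * U t (m + 1)) + L t (monom 1 k * U t (m - t))"
    by (simp add: L_add)
  moreover have "L t (monom 1 k * U t (m + 1)) = 0"
    using Suc.IH[of "m + 1"] Suc.prems by simp
  moreover have "L t (monom 1 k * U t (m - t)) = (if m = Suc k * t then 1 else 0)"
    using Suc.IH[of "m - t"] Suc.prems by auto
  ultimately show ?case by simp
qed

text \<open>Hence, U_n being monic of degree n, L(U_m U_n) = [m = n t] whenever m \<ge> n t.\<close>
lemma L_U_mult_U:
  assumes t: "1 \<le> t" and m: "n * t \<le> m"
  shows "L t (U t m * U t n) = (if m = n * t then 1 else 0)"
proof -
  have "L t (U t m * U t n) = (\<Sum>j\<le>n. coeff (U t n) j * L t (monom 1 j * U t m))"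
    using L_mult_expand[of t "U t n" "U t m"] by (simp add: U_degree mult.commute)
  also have "\<dots> = (\<Sum>j\<le>n. if j = n \<and> m = n * t then 1 else 0)"
  proof (intro sum.cong refl)
    fix j assume "j \<in> {..n}"
    hence "j \<le> n" by simp
    hence "j * t \<le> m" using m mult_le_mono1[of j n t] by linarith
    moreover have "m = j * t \<longleftrightarrow> j = n \<and> m = n * t"
      using \<open>j \<le> n\<close> m t mult_le_cancel2[of n t j] by auto
    ultimately show "coeff (U t n) j * L t (monom 1 j * U t m) = (if j = n \<and> m = n * t then 1 else 0)"
      using U_coeff_top[of t n] by (auto simp: L_xpow_U)
  qed
  also have "\<dots> = (if m = n * t then 1 else 0)" by simp
  finally show ?thesis .
qed

theorem mainTheorem2:
  fixes t :: nat
  assumes "t \<ge> 1"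
  shows "(\<forall>n m. m > n * t \<longrightarrow> L t (U t m * U t n) = 0) \<and>
         (\<forall>n. L t (U t (n * t) * U t n) = 1)"
  using L_U_mult_U[OF assms] by simp

end
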